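(* Let $\mathcal{AF}_{\vdash}=(\vdash,\overline{\cdot},\widehat{\cdot})$ be a setting that satisfies Pre-Relevance. Then for each $\mathsf{Sem}\in\{\mathsf{Grd},\mathsf{Prf}\}$ the consequence relation $\mathrel{\mid\!\sim}^{\mathcal{AF}_{\vdash}}_{\mathsf{Sem}}$ satisfies Non-Interference: for all $\mathcal{S}_1\cup\{\phi\}\cup\mathcal{S}_2\subseteq\mathcal{L}$ with $(\mathcal{S}_1\cup\{\phi\})\mid\mathcal{S}_2$, we have $\mathcal{S}_1\mathrel{\mid\!\sim}_{\mathsf{Sem}}\phi$ iff $\mathcal{S}_1\cup\mathcal{S}_2\mathrel{\mid\!\sim}_{\mathsf{Sem}}\phi$.
   Context: $\mathcal{L}$ is the set of formulas of a language built from propositional atoms; for $\mathcal{S}\subseteq\mathcal{L}$, $\mathsf{Atoms}(\mathcal{S})$ is the set of atoms occurring in formulas of $\mathcal{S}$, and $\mathcal{S}_1\mid\mathcal{S}_2$ means $\mathsf{Atoms}(\mathcal{S}_1)\cap\mathsf{Atoms}(\mathcal{S}_2)=\emptyset$. $\wp_{\sf fin}(X)$ is the set of finite subsets of $X$. A setting is a triple $(\vdash,\overline{\cdot},\widehat{\cdot})$ where ${\vdash}\subseteq\wp_{\sf fin}(\mathcal{L})\times\mathcal{L}$ is an arbitrary relation (no reflexivity, monotonicity or transitivity assumed), $\overline{\cdot}:\mathcal{L}\to\wp(\mathcal{L})$ is a contrariness function, and $\widehat{\cdot}$ assigns to each nonempty finite set of formulas a finite set of formulas (with the convention $\widehat{\emptyset}=\emptyset$).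 For $\mathcal{S}\subseteq\mathcal{L}$, $\mathit{Arg}_{\vdash}(\mathcal{S})$ is the set of pairs $(\Gamma,\gamma)$ with $\Gamma\subseteq\mathcal{S}$ finite and $\Gamma\vdash\gamma$; $\mathsf{Supp}((\Gamma,\gamma))=\Gamma$, $\mathsf{Conc}((\Gamma,\gamma))=\gamma$. $\mathcal{AF}_{\vdash}(\mathcal{S})$ is the directed graph on $\mathit{Arg}_{\vdash}(\mathcal{S})$ in which $(\Gamma,\gamma)$ attacks $(\Gamma',\gamma')$ iff $\gamma\in\overline{\phi}$ for some $\phi\in\widehat{\Gamma'}$. For $\mathcal{A}\subseteq\mathit{Arg}_{\vdash}(\mathcal{S})$: conflict-free = no member attacks a member; $\mathcal{A}$ defends $a$ iff every attacker of $a$ in $\mathit{Arg}_{\vdash}(\mathcal{S})$ is attacked by some member of $\mathcal{A}$; admissible = conflict-free and defends all its members; complete = admissible and contains every argument it defends; preferred = $\subseteq$-maximal complete; grounded = the $\subseteq$-minimal complete set; stable = admissible and attacks every argument not in it. $\mathsf{Grd},\mathsf{Prf}$ denote these semantics. Consequence: $\mathcal{S}\mathrel{\mid\!\sim}^{\mathcal{AF}_{\vdash}}_{\mathsf{Sem}}\phi$ iff every $\mathsf{Sem}$-extension of $\mathcal{AF}_{\vdash}(\mathcal{S})$ contains an argument with conclusion $\phi$. Pre-Relevance: (a) $\vdash$ is Pre-Relevant iff for all $\mathcal{S}_1,\mathcal{S}_2,\phi$ with $\mathcal{S}_1\cup\{\phi\}\mid\mathcal{S}_2$, if $\mathcal{S}_1\cup\mathcal{S}_2\vdash\phi$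 then $\mathcal{S}_1'\vdash\phi$ for some $\mathcal{S}_1'\subseteq\mathcal{S}_1$. (b) The setting is prime iff for all sets of atoms $\mathcal{A}_1\mid\mathcal{A}_2$, all finite $\mathcal{S}_1,\mathcal{T}_1,\mathcal{S}_2,\mathcal{T}_2$ with $\mathsf{Atoms}(\mathcal{S}_i),\mathsf{Atoms}(\mathcal{T}_i)\subseteq\mathcal{A}_i$, and all $\phi,\psi$ with $\psi\in\overline{\phi}$ and $\phi\in\widehat{\mathcal{T}_1\cup\mathcal{T}_2}$: if $\mathcal{S}_1\cup\mathcal{S}_2\vdash\psi$ then there are $i\in\{1,2\}$, $\mathcal{S}_i'\subseteq\mathcal{S}_i$, $\phi_i\in\widehat{\mathcal{T}_i}$ and $\psi_i\in\overline{\phi_i}$ with $\mathcal{S}_i'\vdash\psi_i$. (c) A setting satisfies Pre-Relevance iff $\vdash$ is Pre-Relevant, the setting is prime, and $\widehat{\Delta}\subseteq\widehat{\Delta\cup\Delta'}$ for all finite $\Delta,\Delta'$. *)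

theory Defs
  imports Main
begin

text \<open>A setting is (der, contr, hat): der relates finite sets of formulas to formulas
  (only its values on finite sets are ever used), contr is the contrariness function,
  hat assigns to finite sets finite sets of formulas.\<close>

definition Atoms :: "('f \<Rightarrow> 'a set) \<Rightarrow> 'f set \<Rightarrow> 'a set" where
  "Atoms at S = (\<Union>x\<in>S. at x)"

definition indep :: "('f \<Rightarrow> 'a set) \<Rightarrow> 'f set \<Rightarrow> 'f set \<Rightarrow> bool" where
  "indep at S1 S2 \<longleftrightarrow> Atoms at S1 \<inter> Atoms at S2 = {}"

definition Arg :: "('f set \<Rightarrow> 'f \<Rightarrow> bool) \<Rightarrow> 'f set \<Rightarrow> ('f set \<times> 'f) set" where
  "Arg der S = {(\<Gamma>, \<gamma>). finite \<Gamma> \<and> \<Gamma> \<subseteq> S \<and> der \<Gamma> \<gamma>}"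

definition attacks :: "('f \<Rightarrow> 'f set) \<Rightarrow> ('f set \<Rightarrow> 'f set) \<Rightarrow> ('f set \<times> 'f) \<Rightarrow> ('f set \<times> 'f) \<Rightarrow> bool" where
  "attacks contr hat a b \<longleftrightarrow> (\<exists>\<phi>\<in>hat (fst b). snd a \<in> contr \<phi>)"

definition conflict_free where
  "conflict_free contr hat E \<longleftrightarrow> (\<forall>a\<in>E. \<forall>b\<in>E. \<not> attacks contr hat a b)"

definition defends where
  "defends der contr hat S E a \<longleftrightarrow>
     (\<forall>b\<in>Arg der S. attacks contr hat b a \<longrightarrow> (\<exists>c\<in>E. attacks contr hat c b))"

definition admissible where
  "admissible der contr hat S E \<longleftrightarrow> E \<subseteq> Arg der S \<and> conflict_free contr hat E \<and>
     (\<forall>a\<in>E. defends der contr hat S E a)"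

definition complete where
  "complete der contr hat S E \<longleftrightarrow> admissible der contr hat S E \<and>
     (\<forall>a\<in>Arg der S. defends der contr hat S E a \<longrightarrow> a \<in> E)"

definition preferred where
  "preferred der contr hat S E \<longleftrightarrow> complete der contr hat S E \<and>
     \<not> (\<exists>E'. complete der contr hat S E' \<and> E \<subset> E')"

definition grounded where
  "grounded der contr hat S E \<longleftrightarrow> complete der contr hat S E \<and>
     \<not> (\<exists>E'. complete der contr hat S E' \<and> E' \<subset> E)"

datatype sem = Grd | Prf

fun extension :: "sem \<Rightarrow> ('f set \<Rightarrow> 'f \<Rightarrow> bool) \<Rightarrow> ('f \<Rightarrow> 'f set) \<Rightarrow> ('f set \<Rightarrow> 'f set)
   \<Rightarrow> 'f set \<Rightarrow> ('f set \<times> 'f) set \<Rightarrow> bool" where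
  "extension Grd = grounded"
| "extension Prf = preferred"

definition nmcons where
  "nmcons Sem der contr hat S \<phi> \<longleftrightarrow>
     (\<forall>E. extension Sem der contr hat S E \<longrightarrow> (\<exists>a\<in>E. snd a = \<phi>))"

definition setting :: "('f set \<Rightarrow> 'f set) \<Rightarrow> bool" where
  "setting hat \<longleftrightarrow> hat {} = {} \<and> (\<forall>\<Delta>. finite \<Delta> \<longrightarrow> finite (hat \<Delta>))"

definition pre_relevant_der where
  "pre_relevant_der at der \<longleftrightarrow>
    (\<forall>S1 S2 \<phi>. finite S1 \<and> finite S2 \<and> indep at (S1 \<union> {\<phi>}) S2 \<and> der (S1 \<union> S2) \<phi>
        \<longrightarrow> (\<exists>S1'. S1' \<subseteq> S1 \<and> der S1' \<phi>))"

definition prime where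
  "prime at der contr hat \<longleftrightarrow>
    (\<forall>A1 A2 S1 T1 S2 T2 \<phi> \<psi>. A1 \<inter> A2 = {} \<and>
        finite S1 \<and> finite T1 \<and> finite S2 \<and> finite T2 \<and>
        Atoms at S1 \<subseteq> A1 \<and> Atoms at T1 \<subseteq> A1 \<and> Atoms at S2 \<subseteq> A2 \<and> Atoms at T2 \<subseteq> A2 \<and>
        \<psi> \<in> contr \<phi> \<and> \<phi> \<in> hat (T1 \<union> T2) \<and> der (S1 \<union> S2) \<psi>
      \<longrightarrow> (\<exists>S1' \<phi>1 \<psi>1. S1' \<subseteq> S1 \<and> \<phi>1 \<in> hat T1 \<and> \<psi>1 \<in> contr \<phi>1 \<and> der S1' \<psi>1)
        \<or> (\<exists>S2' \<phi>2 \<psi>2. S2' \<subseteq> S2 \<and> \<phi>2 \<in> hat T2 \<and> \<psi>2 \<in> contr \<phi>2 \<and> der S2' \<psi>2))"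

definition pre_relevance where
  "pre_relevance at der contr hat \<longleftrightarrow> pre_relevant_der at der \<and> prime at der contr hat \<and>
     (\<forall>\<Delta> \<Delta>'. finite \<Delta> \<and> finite \<Delta>' \<longrightarrow> hat \<Delta> \<subseteq> hat (\<Delta> \<union> \<Delta>'))"

definition non_interference where
  "non_interference at Sem der contr hat \<longleftrightarrow>
    (\<forall>S1 S2 \<phi>. indep at (S1 \<union> {\<phi>}) S2 \<longrightarrow>
        (nmcons Sem der contr hat S1 \<phi> \<longleftrightarrow> nmcons Sem der contr hat (S1 \<union> S2) \<phi>))"

end

theory Submission
  imports Defs
begin

text \<open>Pre-Relevance lets every argument over \<open>S1 \<union> S2\<close> that concludes \<open>\<phi>\<close>, or attacks an
  argument over \<open>S1\<close>, be cut down to an argument with the same role whose support is a subset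
  of the original one inside \<open>S1\<close>; conversely, monotonicity of \<open>hat\<close> transfers attacks from a
  support to all larger supports. Hence complete extensions are closed under sub-supports, the
  defence operator commutes with restriction to the arguments over \<open>S1\<close>, and
  \<open>E \<mapsto> E \<inter> Arg S1\<close> maps the grounded (preferred) extensions over \<open>S1 \<union> S2\<close> onto those
  over \<open>S1\<close>. An argument for \<open>\<phi>\<close> in \<open>E\<close> can be cut down to one in \<open>E \<inter> Arg S1\<close>.\<close>

definition defended ::
  "('f set \<Rightarrow> 'f \<Rightarrow> bool) \<Rightarrow> ('f \<Rightarrow> 'f set) \<Rightarrow> ('f set \<Rightarrow> 'f set) \<Rightarrow> 'f set
    \<Rightarrow> ('f set \<times> 'f) set \<Rightarrow> ('f set \<times> 'f) set" where
  "defended der contr hat S X = {a \<in> Arg der S. defends der contr hat S X a}"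

definition maximal_admissible ::
  "('f set \<Rightarrow> 'f \<Rightarrow> bool) \<Rightarrow> ('f \<Rightarrow> 'f set) \<Rightarrow> ('f set \<Rightarrow> 'f set) \<Rightarrow> 'f set
    \<Rightarrow> ('f set \<times> 'f) set \<Rightarrow> bool" where
  "maximal_admissible der contr hat S M \<longleftrightarrow> admissible der contr hat S M \<and>
     (\<forall>Y. admissible der contr hat S Y \<and> M \<subseteq> Y \<longrightarrow> Y = M)"

definition subsupport_closed :: "('f set \<Rightarrow> 'f \<Rightarrow> bool) \<Rightarrow> 'f set \<Rightarrow> ('f set \<times> 'f) set \<Rightarrow> bool" where
  "subsupport_closed der S X \<longleftrightarrow>
     X \<subseteq> Arg der S \<and> (\<forall>a\<in>X. \<forall>b\<in>Arg der S. fst b \<subseteq> fst a \<longrightarrow> b \<in> X)"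

lemma defends_mono:
  "defends der contr hat S X a \<Longrightarrow> X \<subseteq> Y \<Longrightarrow> defends der contr hat S Y a"
  unfolding defends_def by blast

lemma mono_defended: "mono (defended der contr hat S)"
  unfolding mono_def defended_def using defends_mono by blast

lemma admissible_iff_defended:
  "admissible der contr hat S E \<longleftrightarrow>
     conflict_free contr hat E \<and> E \<subseteq> defended der contr hat S E"
  unfolding admissible_def defended_def by blast

lemma complete_iff_fixpoint:
  "complete der contr hat S E \<longleftrightarrow>
     conflict_free contr hat E \<and> defended der contr hat S E = E"
  unfolding complete_def admissible_def defended_def by blast

lemma conflict_free_lfp_defended: "conflict_free contr hat (lfp (defended der contr hat S))"
proof -
  let ?G = "lfp (defended der contr hat S)"
  have G: "defended der contr hat S ?G = ?G" by (rule lfp_fixpoint[OF mono_defended])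
  define Y where "Y = {x \<in> Arg der S. \<not> (\<exists>u\<in>?G. attacks contr hat u x)}"
  have "defended der contr hat S Y \<subseteq> Y"
  proof
    fix x assume "x \<in> defended der contr hat S Y"
    hence x: "x \<in> Arg der S" "defends der contr hat S Y x" unfolding defended_def by auto
    have "\<not> attacks contr hat u x" if u: "u \<in> ?G" for u
    proof
      assume ux: "attacks contr hat u x"
      have u': "u \<in> Arg der S" "defends der contr hat S ?G u"
        using u G unfolding defended_def by auto
      obtain y where y: "y \<in> Y" "attacks contr hat y u" using x(2) u'(1) ux unfolding defends_def by blast
      have "y \<in> Arg der S" using y(1) Y_def by simp
      then obtain u' where "u' \<in> ?G" "attacks contr hat u' y" using u'(2) y(2) unfolding defends_def by blast
      thus False using y(1) Y_def by blast
    qed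
    thus "x \<in> Y" using x(1) Y_def by blast
  qed
  hence "?G \<subseteq> Y" by (rule lfp_lowerbound)
  thus ?thesis unfolding conflict_free_def Y_def by blast
qed

lemma complete_lfp_defended: "complete der contr hat S (lfp (defended der contr hat S))"
  unfolding complete_iff_fixpoint
  using conflict_free_lfp_defended lfp_fixpoint[OF mono_defended] by blast

lemma lfp_defended_subset_complete:
  "complete der contr hat S E \<Longrightarrow> lfp (defended der contr hat S) \<subseteq> E"
  by (rule lfp_lowerbound) (simp add: complete_iff_fixpoint)

lemma grounded_iff_lfp: "grounded der contr hat S E \<longleftrightarrow> E = lfp (defended der contr hat S)"
proof
  assume "grounded der contr hat S E"
  thus "E = lfp (defended der contr hat S)"
    unfolding grounded_def using complete_lfp_defended lfp_defended_subset_complete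
    by (metis psubsetI)
next
  assume "E = lfp (defended der contr hat S)"
  thus "grounded der contr hat S E"
    unfolding grounded_def using complete_lfp_defended lfp_defended_subset_complete by blast
qed

lemma admissible_insert_defended:
  assumes E: "admissible der contr hat S E" and a: "a \<in> defended der contr hat S E"
  shows "admissible der contr hat S (insert a E)"
proof -
  have cf: "conflict_free contr hat E" and EE: "E \<subseteq> defended der contr hat S E"
    using E unfolding admissible_iff_defended by blast+
  have aA: "a \<in> Arg der S" and a_def: "defends der contr hat S E a"
    using a unfolding defended_def by blast+
  have E_not_att_a: "\<not> attacks contr hat c a" if "c \<in> E" for c
  proof
    assume "attacks contr hat c a"
    moreover have "c \<in> Arg der S" using that EE unfolding defended_def by blast
    ultimately obtain d where "d \<in> E" "attacks contr hat d c"
      using a_def unfolding defends_def by blast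
    thus False using that cf unfolding conflict_free_def by blast
  qed
  have counterattacked: "\<exists>c\<in>E. attacks contr hat c a" if "attacks contr hat a m" "m \<in> E \<or> m = a" for m
    using that aA a_def EE unfolding defended_def defends_def by blast
  have "conflict_free contr hat (insert a E)"
    using cf E_not_att_a counterattacked unfolding conflict_free_def by blast
  moreover have "insert a E \<subseteq> defended der contr hat S (insert a E)"
    using a EE monoD[OF mono_defended, of E "insert a E"] by blast
  ultimately show ?thesis unfolding admissible_iff_defended by blast
qed

lemma maximal_admissible_complete:
  assumes M: "maximal_admissible der contr hat S M"
  shows "complete der contr hat S M"
proof -
  have adm: "admissible der contr hat S M" using M unfolding maximal_admissible_def by blast
  have "a \<in> M" if "a \<in> defended der contr hat S M" for a
    using admissible_insert_defended[OF adm that] M unfolding maximal_admissible_def by blast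
  thus ?thesis using adm unfolding admissible_iff_defended complete_iff_fixpoint by blast
qed

lemma admissible_Union_chain:
  assumes adm: "\<And>E. E \<in> C \<Longrightarrow> admissible der contr hat S E"
    and chain: "\<And>E F. E \<in> C \<Longrightarrow> F \<in> C \<Longrightarrow> E \<subseteq> F \<or> F \<subseteq> E"
  shows "admissible der contr hat S (\<Union>C)"
proof -
  have "\<not> attacks contr hat a b" if "a \<in> \<Union>C" "b \<in> \<Union>C" for a b
  proof -
    obtain E where "E \<in> C" "a \<in> E" "b \<in> E" using \<open>a \<in> \<Union>C\<close> \<open>b \<in> \<Union>C\<close> chain by blast
    thus ?thesis using adm unfolding admissible_def conflict_free_def by blast
  qed
  moreover have "E \<subseteq> defended der contr hat S (\<Union>C)" if "E \<in> C" for E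
    using that adm monoD[OF mono_defended, of E "\<Union>C"]
    unfolding admissible_iff_defended by blast
  ultimately show ?thesis unfolding admissible_iff_defended conflict_free_def by blast
qed

lemma admissible_extends_to_maximal:
  assumes "admissible der contr hat S X"
  obtains M where "maximal_admissible der contr hat S M" "X \<subseteq> M"
proof -
  let ?A = "{Y. admissible der contr hat S Y \<and> X \<subseteq> Y}"
  have "\<exists>M\<in>?A. \<forall>Y\<in>?A. M \<subseteq> Y \<longrightarrow> Y = M"
  proof (rule subset_Zorn_nonempty)
    show "?A \<noteq> {}" using assms by blast
    fix C assume "C \<noteq> {}" "subset.chain ?A C"
    hence C: "C \<subseteq> ?A" "\<forall>E\<in>C. \<forall>F\<in>C. E \<subseteq> F \<or> F \<subseteq> E"
      unfolding subset_chain_def by simp_all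
    have "admissible der contr hat S (\<Union>C)"
      by (rule admissible_Union_chain) (use C in blast)+
    moreover have "X \<subseteq> \<Union>C" using \<open>C \<noteq> {}\<close> C(1) by blast
    ultimately show "\<Union>C \<in> ?A" by blast
  qed
  then obtain M where "M \<in> ?A" "\<forall>Y\<in>?A. M \<subseteq> Y \<longrightarrow> Y = M" by blast
  hence "maximal_admissible der contr hat S M" "X \<subseteq> M"
    unfolding maximal_admissible_def by blast+
  thus thesis by (rule that)
qed

lemma preferred_iff_maximal_admissible:
  "preferred der contr hat S E \<longleftrightarrow> maximal_admissible der contr hat S E"
proof
  assume pE: "preferred der contr hat S E"
  have "Y = E" if Y: "admissible der contr hat S Y" "E \<subseteq> Y" for Y
  proof -
    obtain M where "maximal_admissible der contr hat S M" "Y \<subseteq> M"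
      using admissible_extends_to_maximal[OF Y(1)] .
    thus ?thesis using pE Y(2) maximal_admissible_complete unfolding preferred_def by blast
  qed
  thus "maximal_admissible der contr hat S E"
    using pE unfolding preferred_def complete_def maximal_admissible_def by blast
next
  assume "maximal_admissible der contr hat S E"
  thus "preferred der contr hat S E"
    using maximal_admissible_complete unfolding preferred_def maximal_admissible_def complete_def
    by blast
qed

lemma extension_complete:
  "extension Sem der contr hat S E \<Longrightarrow> complete der contr hat S E"
  by (cases Sem) (simp_all add: grounded_def preferred_def)

locale monotone_hat =
  fixes hat :: "'f set \<Rightarrow> 'f set"
  assumes hat_mono: "finite \<Delta> \<Longrightarrow> \<Delta>' \<subseteq> \<Delta> \<Longrightarrow> hat \<Delta>' \<subseteq> hat \<Delta>"
begin

lemma attacks_supersupport: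
  assumes "finite (fst b)" "fst b' \<subseteq> fst b" "attacks contr hat c b'"
  shows "attacks contr hat c b"
  using assms hat_mono unfolding attacks_def by blast

lemma subsupport_closed_defended: "subsupport_closed der S (defended der contr hat S X)"
  unfolding subsupport_closed_def defended_def defends_def Arg_def
  using attacks_supersupport by fastforce

lemma subsupport_closed_complete:
  "complete der contr hat S E \<Longrightarrow> subsupport_closed der S E"
  using subsupport_closed_defended unfolding complete_iff_fixpoint by metis

end

lemma Atoms_mono: "X \<subseteq> Y \<Longrightarrow> Atoms at X \<subseteq> Atoms at Y"
  unfolding Atoms_def by blast

locale independent_union =
  fixes at :: "'f \<Rightarrow> 'a set" and der :: "'f set \<Rightarrow> 'f \<Rightarrow> bool"
    and contr :: "'f \<Rightarrow> 'f set" and hat :: "'f set \<Rightarrow> 'f set"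
    and S1 S2 :: "'f set" and \<phi> :: 'f
  assumes setting: "setting hat"
    and pre_relevance: "pre_relevance at der contr hat"
    and independent: "indep at (S1 \<union> {\<phi>}) S2"
begin

abbreviation "S \<equiv> S1 \<union> S2"

sublocale monotone_hat hat
proof
  fix \<Delta> \<Delta>' :: "'f set" assume "finite \<Delta>" "\<Delta>' \<subseteq> \<Delta>"
  moreover have "\<Delta>' \<union> \<Delta> = \<Delta>" using \<open>\<Delta>' \<subseteq> \<Delta>\<close> by blast
  ultimately show "hat \<Delta>' \<subseteq> hat \<Delta>"
    using pre_relevance finite_subset unfolding pre_relevance_def by metis
qed

lemma Arg_S1_subset: "Arg der S1 \<subseteq> Arg der S"
  unfolding Arg_def by blast

lemma argument_reduct:
  assumes "(\<Delta>, \<phi>) \<in> Arg der S"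
  obtains \<Delta>' where "\<Delta>' \<subseteq> \<Delta>" "(\<Delta>', \<phi>) \<in> Arg der S1"
proof -
  have \<Delta>: "finite \<Delta>" "\<Delta> \<subseteq> S" "der (\<Delta> \<inter> S1 \<union> (\<Delta> - S1)) \<phi>"
    using assms unfolding Arg_def by (simp_all add: Int_Diff_Un)
  have "indep at (\<Delta> \<inter> S1 \<union> {\<phi>}) (\<Delta> - S1)"
    using independent Atoms_mono[of "\<Delta> \<inter> S1 \<union> {\<phi>}" "S1 \<union> {\<phi>}" at]
      Atoms_mono[of "\<Delta> - S1" S2 at] \<Delta>(2)
    unfolding indep_def by blast
  moreover have "pre_relevant_der at der" using pre_relevance unfolding pre_relevance_def by blast
  ultimately obtain \<Delta>' where \<Delta>': "\<Delta>' \<subseteq> \<Delta> \<inter> S1" "der \<Delta>' \<phi>"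
    using \<Delta> unfolding pre_relevant_der_def by (meson finite_Diff finite_Int)
  hence "finite \<Delta>'" using \<Delta>(1) finite_subset by blast
  thus thesis using that \<Delta>' unfolding Arg_def by blast
qed

lemma attack_reduct:
  assumes b: "b \<in> Arg der S" and a: "a \<in> Arg der S1" and ba: "attacks contr hat b a"
  obtains b' where "b' \<in> Arg der S1" "fst b' \<subseteq> fst b" "attacks contr hat b' a"
proof -
  obtain \<Delta> \<psi> where b_eq: "b = (\<Delta>, \<psi>)" by (cases b)
  have \<Delta>: "finite \<Delta>" "\<Delta> \<subseteq> S" "der (\<Delta> \<inter> S1 \<union> (\<Delta> - S1)) \<psi>"
    using b b_eq unfolding Arg_def by (simp_all add: Int_Diff_Un)
  have \<Gamma>: "finite (fst a)" "fst a \<subseteq> S1" using a unfolding Arg_def by auto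
  obtain \<chi> where \<chi>: "\<chi> \<in> hat (fst a \<union> {})" "\<psi> \<in> contr \<chi>"
    using ba b_eq unfolding attacks_def by auto
  \<comment> \<open>Primality for the split \<open>(\<Delta> \<inter> S1, fst a) | (\<Delta> - S1, {})\<close>; its \<open>S2\<close>-side
    alternative is impossible because \<open>hat {} = {}\<close>.\<close>
  have "Atoms at (S1 \<union> {\<phi>}) \<inter> Atoms at S2 = {}" using independent unfolding indep_def .
  moreover have "finite (\<Delta> \<inter> S1)" "finite (\<Delta> - S1)" "finite {}" using \<Delta>(1) by simp_all
  moreover have "Atoms at (\<Delta> \<inter> S1) \<subseteq> Atoms at (S1 \<union> {\<phi>})"
    "Atoms at (fst a) \<subseteq> Atoms at (S1 \<union> {\<phi>})" "Atoms at (\<Delta> - S1) \<subseteq> Atoms at S2"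
    "Atoms at {} \<subseteq> Atoms at S2"
    using \<Delta>(2) \<Gamma>(2) by (intro Atoms_mono; blast)+
  moreover have "prime at der contr hat" using pre_relevance unfolding pre_relevance_def by blast
  moreover note \<Delta>(3) \<Gamma>(1) \<chi>
  ultimately have "(\<exists>S1' \<chi>1 \<psi>1. S1' \<subseteq> \<Delta> \<inter> S1 \<and> \<chi>1 \<in> hat (fst a) \<and> \<psi>1 \<in> contr \<chi>1 \<and> der S1' \<psi>1)
      \<or> (\<exists>S2' \<chi>2 \<psi>2. S2' \<subseteq> \<Delta> - S1 \<and> \<chi>2 \<in> hat {} \<and> \<psi>2 \<in> contr \<chi>2 \<and> der S2' \<psi>2)"
    by (intro prime_def[THEN iffD1, rule_format, of at der contr hat "Atoms at (S1 \<union> {\<phi>})"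
        "Atoms at S2" "\<Delta> \<inter> S1" "fst a" "\<Delta> - S1" "{}" \<psi> \<chi>] conjI)
      assumption+
  moreover have "hat {} = {}" using setting unfolding setting_def by blast
  ultimately obtain \<Delta>' \<chi>1 \<psi>1 where
    \<Delta>': "\<Delta>' \<subseteq> \<Delta> \<inter> S1" "\<chi>1 \<in> hat (fst a)" "\<psi>1 \<in> contr \<chi>1" "der \<Delta>' \<psi>1"
    by blast
  have "(\<Delta>', \<psi>1) \<in> Arg der S1" using \<Delta>' \<Delta>(1) finite_subset unfolding Arg_def by blast
  moreover have "attacks contr hat (\<Delta>', \<psi>1) a" using \<Delta>' unfolding attacks_def by auto
  ultimately show thesis using that \<Delta>'(1) b_eq by auto
qed

lemma defended_S1_subset: "defended der contr hat S1 X \<subseteq> defended der contr hat S X"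
proof
  fix a assume "a \<in> defended der contr hat S1 X"
  hence a: "a \<in> Arg der S1" "defends der contr hat S1 X a" unfolding defended_def by blast+
  have "\<exists>c\<in>X. attacks contr hat c b" if b: "b \<in> Arg der S" "attacks contr hat b a" for b
  proof -
    obtain b' where b': "b' \<in> Arg der S1" "fst b' \<subseteq> fst b" "attacks contr hat b' a"
      using attack_reduct[OF b(1) a(1) b(2)] .
    then obtain c where "c \<in> X" "attacks contr hat c b'" using a(2) unfolding defends_def by blast
    moreover have "finite (fst b)" using b(1) unfolding Arg_def by auto
    ultimately show ?thesis using attacks_supersupport b'(2) by blast
  qed
  thus "a \<in> defended der contr hat S X"
    using a(1) Arg_S1_subset unfolding defended_def defends_def by blast
qed

lemma defended_restrict:
  assumes X: "subsupport_closed der S X"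
  shows "defended der contr hat S X \<inter> Arg der S1 = defended der contr hat S1 (X \<inter> Arg der S1)"
proof
  show "defended der contr hat S X \<inter> Arg der S1 \<subseteq> defended der contr hat S1 (X \<inter> Arg der S1)"
  proof
    fix a assume a: "a \<in> defended der contr hat S X \<inter> Arg der S1"
    have "\<exists>c\<in>X \<inter> Arg der S1. attacks contr hat c b"
      if b: "b \<in> Arg der S1" "attacks contr hat b a" for b
    proof -
      obtain c where c: "c \<in> X" "attacks contr hat c b"
        using a b Arg_S1_subset unfolding defended_def defends_def by blast
      moreover have "c \<in> Arg der S" using c(1) X unfolding subsupport_closed_def by blast
      ultimately obtain c' where "c' \<in> Arg der S1" "fst c' \<subseteq> fst c" "attacks contr hat c' b"
        using attack_reduct b(1) by blast
      moreover have "c' \<in> X" using X c(1) \<open>c' \<in> Arg der S1\<close> \<open>fst c' \<subseteq> fst c\<close> Arg_S1_subset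
        unfolding subsupport_closed_def by blast
      ultimately show ?thesis by blast
    qed
    thus "a \<in> defended der contr hat S1 (X \<inter> Arg der S1)"
      using a unfolding defended_def defends_def by blast
  qed
  have "defended der contr hat S1 (X \<inter> Arg der S1) \<subseteq> defended der contr hat S (X \<inter> Arg der S1)"
    by (rule defended_S1_subset)
  also have "\<dots> \<subseteq> defended der contr hat S X" by (rule monoD[OF mono_defended]) blast
  finally show "defended der contr hat S1 (X \<inter> Arg der S1) \<subseteq> defended der contr hat S X \<inter> Arg der S1"
    unfolding defended_def by blast
qed

lemma admissible_lift: "admissible der contr hat S1 E \<Longrightarrow> admissible der contr hat S E"
  using defended_S1_subset unfolding admissible_iff_defended by blast

lemma complete_restrict:
  assumes "complete der contr hat S E"
  shows "complete der contr hat S1 (E \<inter> Arg der S1)"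
proof -
  have "defended der contr hat S1 (E \<inter> Arg der S1) = E \<inter> Arg der S1"
    using defended_restrict[OF subsupport_closed_complete[OF assms]] assms
    unfolding complete_iff_fixpoint by simp
  thus ?thesis using assms unfolding complete_iff_fixpoint conflict_free_def by blast
qed

lemma complete_conclusion_reduct:
  assumes E: "complete der contr hat S E" and a: "a \<in> E" "snd a = \<phi>"
  shows "\<exists>a'\<in>E \<inter> Arg der S1. snd a' = \<phi>"
proof -
  obtain \<Delta> where a_eq: "a = (\<Delta>, \<phi>)" using a(2) by (cases a) simp
  have E_closed: "subsupport_closed der S E" by (rule subsupport_closed_complete[OF E])
  hence "(\<Delta>, \<phi>) \<in> Arg der S" using a(1) a_eq unfolding subsupport_closed_def by blast
  then obtain \<Delta>' where "\<Delta>' \<subseteq> \<Delta>" "(\<Delta>', \<phi>) \<in> Arg der S1" by (rule argument_reduct)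
  moreover have "(\<Delta>', \<phi>) \<in> E"
    using E_closed a(1) a_eq calculation Arg_S1_subset unfolding subsupport_closed_def by fastforce
  ultimately show ?thesis by force
qed

lemma lfp_defended_restrict:
  "lfp (defended der contr hat S) \<inter> Arg der S1 = lfp (defended der contr hat S1)"
proof
  let ?G = "lfp (defended der contr hat S)" and ?G1 = "lfp (defended der contr hat S1)"
  have G: "defended der contr hat S ?G = ?G" and G1: "defended der contr hat S1 ?G1 = ?G1"
    by (rule lfp_fixpoint[OF mono_defended])+
  have "defended der contr hat S1 (?G \<inter> Arg der S1) = ?G \<inter> Arg der S1"
    using defended_restrict[OF subsupport_closed_defended[of der S contr ?G]] G by simp
  thus "?G1 \<subseteq> ?G \<inter> Arg der S1" by (intro lfp_lowerbound) simp
  define Y where "Y = {c \<in> Arg der S. \<forall>c'\<in>Arg der S1. fst c' \<subseteq> fst c \<longrightarrow> c' \<in> ?G1}"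
  have Y_closed: "subsupport_closed der S Y" unfolding subsupport_closed_def Y_def by blast
  have Y_S1: "Y \<inter> Arg der S1 \<subseteq> ?G1" unfolding Y_def by blast
  have "defended der contr hat S Y \<subseteq> Y"
  proof
    fix c assume c: "c \<in> defended der contr hat S Y"
    have "c' \<in> ?G1" if c': "c' \<in> Arg der S1" "fst c' \<subseteq> fst c" for c'
    proof -
      have "c' \<in> defended der contr hat S Y \<inter> Arg der S1"
        using subsupport_closed_defended[of der S contr Y] c c' Arg_S1_subset
        unfolding subsupport_closed_def by blast
      also have "\<dots> = defended der contr hat S1 (Y \<inter> Arg der S1)"
        by (rule defended_restrict[OF Y_closed])
      also have "\<dots> \<subseteq> defended der contr hat S1 ?G1" by (rule monoD[OF mono_defended Y_S1])
      finally show ?thesis using G1 by simp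
    qed
    thus "c \<in> Y" using c unfolding Y_def defended_def by blast
  qed
  hence "?G \<subseteq> Y" by (rule lfp_lowerbound)
  thus "?G \<inter> Arg der S1 \<subseteq> ?G1" using Y_S1 by blast
qed

lemma admissible_Un_restrict:
  assumes E: "complete der contr hat S E" and E1: "admissible der contr hat S1 E1"
    and sub: "E \<inter> Arg der S1 \<subseteq> E1"
  shows "admissible der contr hat S (E \<union> E1)"
proof -
  have E_closed: "subsupport_closed der S E" by (rule subsupport_closed_complete[OF E])
  have E1_args: "E1 \<subseteq> Arg der S1" and cf1: "conflict_free contr hat E1"
    using E1 unfolding admissible_def by blast+
  have E_E1: "\<not> attacks contr hat e a" if e: "e \<in> E" and a: "a \<in> E1" for e a
  proof
    assume "attacks contr hat e a"
    moreover have "e \<in> Arg der S" using e E_closed unfolding subsupport_closed_def by blast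
    ultimately obtain e' where e': "e' \<in> Arg der S1" "fst e' \<subseteq> fst e" "attacks contr hat e' a"
      using attack_reduct a E1_args by blast
    hence "e' \<in> E1" using E_closed e sub Arg_S1_subset unfolding subsupport_closed_def by blast
    thus False using cf1 a e'(3) unfolding conflict_free_def by blast
  qed
  have E1_E: "\<not> attacks contr hat a e" if e: "e \<in> E" and a: "a \<in> E1" for e a
  proof
    assume "attacks contr hat a e"
    moreover have "a \<in> Arg der S" using a E1_args Arg_S1_subset by blast
    ultimately obtain c where "c \<in> E" "attacks contr hat c a"
      using E e unfolding complete_def admissible_def defends_def by blast
    thus False using E_E1 a by blast
  qed
  have "E \<subseteq> defended der contr hat S E" "E1 \<subseteq> defended der contr hat S E1"
    using E admissible_lift[OF E1] unfolding complete_def admissible_iff_defended by blast+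
  moreover have "defended der contr hat S E \<union> defended der contr hat S E1
      \<subseteq> defended der contr hat S (E \<union> E1)"
    using monoD[OF mono_defended, of E "E \<union> E1"] monoD[OF mono_defended, of E1 "E \<union> E1"] by blast
  ultimately show ?thesis
    using E cf1 E_E1 E1_E unfolding admissible_iff_defended complete_def conflict_free_def by blast
qed

lemma preferred_restrict:
  assumes "preferred der contr hat S E"
  shows "preferred der contr hat S1 (E \<inter> Arg der S1)"
proof -
  have E: "complete der contr hat S E" using assms unfolding preferred_def by blast
  have "\<not> E \<inter> Arg der S1 \<subset> E1" if E1: "complete der contr hat S1 E1" for E1
  proof
    assume less: "E \<inter> Arg der S1 \<subset> E1"
    have "admissible der contr hat S (E \<union> E1)"
      using admissible_Un_restrict E E1 less unfolding complete_def by blast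
    hence "E1 \<subseteq> E"
      using assms unfolding preferred_iff_maximal_admissible maximal_admissible_def by blast
    moreover have "E1 \<subseteq> Arg der S1" using E1 unfolding complete_def admissible_def by blast
    ultimately show False using less by blast
  qed
  thus ?thesis using complete_restrict[OF E] unfolding preferred_def by blast
qed

lemma preferred_lift:
  assumes E1: "preferred der contr hat S1 E1"
  obtains E where "preferred der contr hat S E" "E \<inter> Arg der S1 = E1"
proof -
  have "admissible der contr hat S E1"
    using E1 admissible_lift unfolding preferred_def complete_def by blast
  then obtain M where M: "maximal_admissible der contr hat S M" "E1 \<subseteq> M"
    by (rule admissible_extends_to_maximal)
  have "complete der contr hat S1 (M \<inter> Arg der S1)"
    by (rule complete_restrict[OF maximal_admissible_complete[OF M(1)]])
  moreover have "E1 \<subseteq> M \<inter> Arg der S1"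
    using E1 M(2) unfolding preferred_def complete_def admissible_def by blast
  ultimately have "M \<inter> Arg der S1 = E1" using E1 unfolding preferred_def by blast
  thus thesis using that M(1) unfolding preferred_iff_maximal_admissible by blast
qed

lemma extension_restrict:
  "extension Sem der contr hat S E \<Longrightarrow> extension Sem der contr hat S1 (E \<inter> Arg der S1)"
  by (cases Sem) (simp_all add: grounded_iff_lfp lfp_defended_restrict preferred_restrict)

lemma extension_lift:
  assumes "extension Sem der contr hat S1 E1"
  obtains E where "extension Sem der contr hat S E" "E \<inter> Arg der S1 = E1"
proof (cases Sem)
  case Grd
  thus thesis using that assms by (simp add: grounded_iff_lfp lfp_defended_restrict)
next
  case Prf
  thus thesis using that assms preferred_lift by auto
qed

lemma nmcons_union_iff:
  "nmcons Sem der contr hat S1 \<phi> \<longleftrightarrow> nmcons Sem der contr hat S \<phi>"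
proof
  assume S1_cons: "nmcons Sem der contr hat S1 \<phi>"
  show "nmcons Sem der contr hat S \<phi>" unfolding nmcons_def
  proof (intro allI impI)
    fix E assume "extension Sem der contr hat S E"
    hence "extension Sem der contr hat S1 (E \<inter> Arg der S1)" by (rule extension_restrict)
    thus "\<exists>a\<in>E. snd a = \<phi>" using S1_cons unfolding nmcons_def by blast
  qed
next
  assume S_cons: "nmcons Sem der contr hat S \<phi>"
  show "nmcons Sem der contr hat S1 \<phi>" unfolding nmcons_def
  proof (intro allI impI)
    fix E1 assume "extension Sem der contr hat S1 E1"
    then obtain E where E: "extension Sem der contr hat S E" "E \<inter> Arg der S1 = E1"
      by (rule extension_lift)
    then obtain a where "a \<in> E" "snd a = \<phi>" using S_cons unfolding nmcons_def by blast
    thus "\<exists>a\<in>E1. snd a = \<phi>"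
      using complete_conclusion_reduct[OF extension_complete[OF E(1)]] E(2) by blast
  qed
qed

end

theorem theorem1:
  fixes at :: "'f \<Rightarrow> 'a set" and der :: "'f set \<Rightarrow> 'f \<Rightarrow> bool"
    and contr :: "'f \<Rightarrow> 'f set" and hat :: "'f set \<Rightarrow> 'f set"
  assumes "setting hat"
    and "pre_relevance at der contr hat"
    and "Sem \<in> {Grd, Prf}"
  shows "non_interference at Sem der contr hat"
  \<comment> \<open>The hypothesis on \<open>Sem\<close> is vacuous: \<open>Grd\<close> and \<open>Prf\<close> are all constructors of \<open>sem\<close>.\<close>
  unfolding non_interference_def
proof (intro allI impI)
  fix S1 S2 \<phi> assume "indep at (S1 \<union> {\<phi>}) S2"
  then interpret independent_union at der contr hat S1 S2 \<phi>
    using assms(1,2) by unfold_locales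
  show "nmcons Sem der contr hat S1 \<phi> \<longleftrightarrow> nmcons Sem der contr hat (S1 \<union> S2) \<phi>"
    by (rule nmcons_union_iff)
qed

end
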